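(* Let $N$ be a subset of $\mathbb N$ and let $\mathscr W_N=\{\mathbf w_m\mid m\in N\}$. If $n\in\mathbb N$ and $n\notin N$, then the monoid $M(\mathscr W_N)$ satisfies the identity $\mathbf w_n\approx x^2(\mathbf w_n)_x$.
   Context: Let $\mathscr X$ be a countably infinite alphabet and $\mathscr X^\ast$ the free monoid over it (words). For each $m\in\mathbb N$, \[ \mathbf w_m=\biggl(\prod_{i=1}^m z_it_i\biggr)\,x\,\biggl(\prod_{i=1}^m z_iy_i^{(m)}\biggr)\,x\,\biggl(\prod_{j=1}^m\biggl(\prod_{i=1}^m y_i^{(m-j)}y_i^{(m+1-j)}\biggr)\biggr), \] where $x$, $z_i$, $t_i$, $y_i^{(k)}$ are pairwise distinct letters of $\mathscr X$ (the same letter names are used for all $m$) and products are taken in increasing order of the index. For a word $\mathbf w$ and a letter $x$, $\mathbf w_x$ denotes the word obtained from $\mathbf w$ by deleting all occurrences of $x$. For a set $\mathscr W$ of words, $M(\mathscr W)$ is the Rees quotient of $\mathscr X^\ast$ modulo the ideal of all words that are not subwords of any word in $\mathscr W$ (its elements are the subwords of words in $\mathscr W$, including the empty word, and a zero $0$). A monoid $S$ satisfies an identity $\mathbf u\approx\mathbf v$ (with $\mathbf u,\mathbf v\in\mathscr X^\ast$) if $\varphi(\mathbf u)=\varphi(\mathbf v)$ for every substitution (monoid homomorphism) $\varphi\colon\mathscr X^\ast\to S$. *)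

theory Defs
  imports Main
begin

text \<open>The countably infinite alphabet: the named letters x, z_i, t_i, y_i^(k)
  together with infinitely many further letters.\<close>
datatype letter = LX | LZ nat | LT nat | LY nat nat | LOther nat

type_synonym word = "letter list"

text \<open>The word w_m (indices i, j run over 1..m; LY i k stands for y_i^(k)).\<close>
definition wm :: "nat \<Rightarrow> word" where
  "wm m =
     concat (map (\<lambda>i. [LZ i, LT i]) [1..<m+1]) @ [LX] @
     concat (map (\<lambda>i. [LZ i, LY i m]) [1..<m+1]) @ [LX] @
     concat (map (\<lambda>j. concat (map (\<lambda>i. [LY i (m - j), LY i (m + 1 - j)]) [1..<m+1])) [1..<m+1])"

definition del :: "letter \<Rightarrow> word \<Rightarrow> word" where
  "del a u = filter (\<lambda>b. b \<noteq> a) u"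

definition is_subword :: "word set \<Rightarrow> word \<Rightarrow> bool" where
  "is_subword W u = (\<exists>w\<in>W. \<exists>p s. w = p @ u @ s)"

text \<open>The Rees quotient M(W): elements Some u (u a subword) and the zero None.\<close>
definition rees_carrier :: "word set \<Rightarrow> word option set" where
  "rees_carrier W = insert None (Some ` {u. is_subword W u})"

fun rees_mult :: "word set \<Rightarrow> word option \<Rightarrow> word option \<Rightarrow> word option" where
  "rees_mult W (Some a) (Some b) = (if is_subword W (a @ b) then Some (a @ b) else None)"
| "rees_mult W _ _ = None"

fun rees_eval :: "word set \<Rightarrow> (letter \<Rightarrow> word option) \<Rightarrow> word \<Rightarrow> word option" where
  "rees_eval W \<sigma> [] = Some []"
| "rees_eval W \<sigma> (a # u) = rees_mult W (\<sigma> a) (rees_eval W \<sigma> u)"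

definition satisfies :: "word set \<Rightarrow> word \<Rightarrow> word \<Rightarrow> bool" where
  "satisfies W u v = (\<forall>\<sigma>. (\<forall>a. \<sigma> a \<in> rees_carrier W) \<longrightarrow> rees_eval W \<sigma> u = rees_eval W \<sigma> v)"

definition WN :: "nat set \<Rightarrow> word set" where
  "WN N = wm ` N"

end

theory Submission
  imports Defs
begin

(* In w_m every letter occurs at most twice, and the two occurrences of a letter are 2m+1
   positions apart, the first one at an even position.  Let phi be a substitution.  If phi(x)
   is empty, both sides of the identity have the same image.  Otherwise both sides are 0 unless
   the image of one of them is a factor of some w_m with m in N, hence m <> n.
   If phi(x)^2 phi((w_n)_x) is a factor of w_m, the square phi(x)^2 forces |phi(x)| = 2m+1 = 1,
   so m = 0, w_0 = xx and every letter other than x is erased.  If phi(w_n) is a factor of w_m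
   and m = 0, a length count gives the same conclusion; in both cases the two sides have the
   same image phi(x)^2.  Finally, phi(w_n) cannot be a factor of w_m for 0 < m <> n: a repeated
   letter of w_n that is not erased goes to a single letter, and its two images lie 2m+1 apart.
   The 2n letters between the two x's of w_n must cover the 2m letters between the images of x,
   so m <= n; and following the repeated letters through the n blocks of the tail of w_n moves
   the image 2m further into w_m at each block, which leaves room only if n <= m. *)

lemma length_concat_map_const:
  assumes "\<And>j. length (F j) = c"
  shows "length (concat (map F [a..<a+m])) = m * c"
  using assms by (induction m) auto

lemma nth_concat_map_const:
  assumes "\<And>j. length (F j) = c" and "k < m" and "r < c"
  shows "concat (map F [a..<a+m]) ! (k * c + r) = F (a + k) ! r"
  using \<open>k < m\<close>
proof (induction m)
  case (Suc m)
  have "concat (map F [a..<a + Suc m]) = concat (map F [a..<a+m]) @ F (a + m)"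
    by simp
  moreover have "k * c + r < m * c" if "k < m"
  proof -
    have "k * c + r < Suc k * c"
      using \<open>r < c\<close> by simp
    also have "\<dots> \<le> m * c"
      using that by (intro mult_le_mono1) simp
    finally show ?thesis .
  qed
  ultimately show ?case
    using Suc by (auto simp: nth_append length_concat_map_const[OF assms(1)] less_Suc_eq)
qed simp

definition wm_head :: "nat \<Rightarrow> word" where
  "wm_head m = concat (map (\<lambda>i. [LZ i, LT i]) [1..<1+m])"

definition wm_middle :: "nat \<Rightarrow> word" where
  "wm_middle m = concat (map (\<lambda>i. [LZ i, LY i m]) [1..<1+m])"

definition wm_tail :: "nat \<Rightarrow> word" where
  "wm_tail m = concat (map (\<lambda>j. concat (map (\<lambda>i. [LY i (m - j), LY i (m + 1 - j)]) [1..<1+m])) [1..<1+m])"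

lemma wm_blocks: "wm m = wm_head m @ [LX] @ wm_middle m @ [LX] @ wm_tail m"
  unfolding wm_def wm_head_def wm_middle_def wm_tail_def by (simp add: add.commute)

lemma length_wm_blocks:
  "length (wm_head m) = m * 2" "length (wm_middle m) = m * 2" "length (wm_tail m) = m * (m * 2)"
  unfolding wm_head_def wm_middle_def wm_tail_def
  by (intro length_concat_map_const; simp)+

lemma length_wm: "length (wm m) = 2*m*m + 4*m + 2"
  unfolding wm_blocks by (simp add: length_wm_blocks)

lemma nth_wm_blocks:
  "p < 2*m \<Longrightarrow> wm m ! p = wm_head m ! p"
  "wm m ! (2*m) = LX"
  "p < 2*m \<Longrightarrow> wm m ! (2*m+1+p) = wm_middle m ! p"
  "wm m ! (4*m+1) = LX"
  "wm m ! (4*m+2+p) = wm_tail m ! p"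
  unfolding wm_blocks by (simp_all add: nth_append length_wm_blocks)

(* Positions are counted from 0, the indices of the letters z_i, t_i and y_i from 1. *)
lemma nth_wm_head_middle:
  assumes "i < m"
  shows "wm m ! (2*i) = LZ (i+1)" and "wm m ! (2*i+1) = LT (i+1)"
    and "wm m ! (2*m+1+2*i) = LZ (i+1)" and "wm m ! (2*m+2+2*i) = LY (i+1) m"
proof -
  have "wm_head m ! (i*2+r) = [LZ (1+i), LT (1+i)] ! r"
    "wm_middle m ! (i*2+r) = [LZ (1+i), LY (1+i) m] ! r" if "r < 2" for r
    unfolding wm_head_def wm_middle_def using assms that
    by (intro nth_concat_map_const; simp)+
  from this[of 0] this[of 1] show "wm m ! (2*i) = LZ (i+1)" "wm m ! (2*i+1) = LT (i+1)"
    "wm m ! (2*m+1+2*i) = LZ (i+1)" "wm m ! (2*m+2+2*i) = LY (i+1) m"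
    using assms nth_wm_blocks(1,3)[of "2*i" m] nth_wm_blocks(1,3)[of "2*i+1" m]
    by (simp_all add: mult.commute)
qed

lemma nth_wm_tail:
  assumes "j < m" and "i < m"
  shows "wm m ! (4*m+2+j*(2*m)+2*i) = LY (i+1) (m-(j+1))"
    and "wm m ! (4*m+3+j*(2*m)+2*i) = LY (i+1) (m-j)"
proof -
  have "wm_tail m ! (j*(m*2) + (i*2+r)) = [LY (1+i) (m - (1+j)), LY (1+i) (m + 1 - (1+j))] ! r"
    if "r < 2" for r
  proof -
    have "wm_tail m ! (j*(m*2) + (i*2+r)) =
        concat (map (\<lambda>i. [LY i (m - (1+j)), LY i (m + 1 - (1+j))]) [1..<1+m]) ! (i*2+r)"
      unfolding wm_tail_def using assms that
      by (intro nth_concat_map_const length_concat_map_const) simp_all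
    also have "\<dots> = [LY (1+i) (m - (1+j)), LY (1+i) (m + 1 - (1+j))] ! r"
      using assms that by (intro nth_concat_map_const) simp_all
    finally show ?thesis .
  qed
  moreover have "4*m+2+j*(2*m)+2*i = 4*m+2+(j*(m*2) + (i*2+0))"
    "4*m+3+j*(2*m)+2*i = 4*m+2+(j*(m*2) + (i*2+1))"
    by simp_all
  ultimately show "wm m ! (4*m+2+j*(2*m)+2*i) = LY (i+1) (m-(j+1))"
    "wm m ! (4*m+3+j*(2*m)+2*i) = LY (i+1) (m-j)"
    by (simp_all only: nth_wm_blocks(5)) simp_all
qed

lemma wm_position_cases:
  assumes "p < length (wm m)"
  obtains (head_z) i where "i < m" "p = 2*i"
    | (head_t) i where "i < m" "p = 2*i+1"
    | (first_x) "p = 2*m"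
    | (middle_z) i where "i < m" "p = 2*m+1+2*i"
    | (middle_y) i where "i < m" "p = 2*m+2+2*i"
    | (second_x) "p = 4*m+1"
    | (tail_even) j i where "j < m" "i < m" "p = 4*m+2+j*(2*m)+2*i"
    | (tail_odd) j i where "j < m" "i < m" "p = 4*m+3+j*(2*m)+2*i"
proof -
  have parity: "q = 2*(q div 2) \<or> q = 2*(q div 2) + 1" for q :: nat
    by presburger
  consider "p < 2*m" | "p = 2*m" | "2*m < p" "p < 4*m+1" | "p = 4*m+1" | "4*m+1 < p"
    by linarith
  then show thesis
  proof cases
    case 1
    then show thesis
      using parity[of p] head_z[of "p div 2"] head_t[of "p div 2"] by linarith
  next
    case 3
    define q where "q = p - (2*m+1)"
    have "p = 2*m+1+q" "q div 2 < m"
      using 3 unfolding q_def by linarith+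
    then show thesis
      using parity[of q] middle_z[of "q div 2"] middle_y[of "q div 2"] by linarith
  next
    case 5
    define q where "q = p - (4*m+2)"
    have p_eq: "p = 4*m+2+q"
      using 5 by (simp add: q_def)
    have "q < m*(2*m)"
      using assms p_eq by (simp add: length_wm algebra_simps)
    then have j_lt: "q div (2*m) < m"
      by (simp add: less_mult_imp_div_less)
    have "q mod (2*m) < m * 2"
      using j_lt by (simp add: mult.commute)
    then have r_lt: "q mod (2*m) div 2 < m"
      by (rule less_mult_imp_div_less)
    have "p = 4*m+2+(q div (2*m))*(2*m) + q mod (2*m)"
      using p_eq by (simp only: div_mult_mod_eq add.assoc)
    then show thesis
      using parity[of "q mod (2*m)"] j_lt r_lt tail_even[of "q div (2*m)" "q mod (2*m) div 2"]
        tail_odd[of "q div (2*m)" "q mod (2*m) div 2"] by linarith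
  qed (use first_x second_x in auto)
qed

fun wm_occurrence :: "nat \<Rightarrow> letter \<Rightarrow> nat \<Rightarrow> bool" where
  "wm_occurrence m (LZ a) p = (\<exists>i<m. a = i+1 \<and> (p = 2*i \<or> p = 2*m+1+2*i))"
| "wm_occurrence m (LT a) p = (\<exists>i<m. a = i+1 \<and> p = 2*i+1)"
| "wm_occurrence m LX p = (p = 2*m \<or> p = 4*m+1)"
| "wm_occurrence m (LY a k) p = (\<exists>i<m. a = i+1 \<and>
     (k = m \<and> p = 2*m+2+2*i \<or>
      (\<exists>j<m. k = m-(j+1) \<and> p = 4*m+2+j*(2*m)+2*i) \<or>
      (\<exists>j<m. k = m-j \<and> p = 4*m+3+j*(2*m)+2*i)))"
| "wm_occurrence m (LOther a) p = False"

lemma wm_occurrence_nth: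
  assumes "p < length (wm m)"
  shows "wm_occurrence m (wm m ! p) p"
  using assms
  by (cases rule: wm_position_cases)
    (auto simp: nth_wm_head_middle[simplified] nth_wm_tail[simplified] nth_wm_blocks(2,4)[simplified])

lemma wm_occurrence_twin:
  assumes "wm_occurrence m l p" and "wm_occurrence m l q" and "p < q"
  shows "q = p + 2*m + 1 \<and> even p"
proof (cases l)
  case (LY a k)
  have diff_inj: "m - a = m - b \<Longrightarrow> a \<le> m \<Longrightarrow> b \<le> m \<Longrightarrow> a = b" for a b
    by arith
  from assms LY show ?thesis
    by (auto simp: algebra_simps dest!: diff_inj)
qed (use assms in auto)

lemma wm_repeat_distance:
  assumes "i < j" and "j < length (wm m)" and "wm m ! i = wm m ! j"
  shows "j = i + 2*m + 1 \<and> even i"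
  using wm_occurrence_twin[OF _ _ assms(1)] wm_occurrence_nth[of i m] wm_occurrence_nth[OF assms(2)] assms by simp

lemma wm_twin_position:
  assumes "2*n+1 \<le> k" and "k < 2*n*n+2*n+2"
  shows "(odd k \<longrightarrow> wm n ! (k-(2*n+1)) = wm n ! k) \<and>
    (even k \<longrightarrow> k+2*n+1 < length (wm n) \<and> wm n ! (k+2*n+1) = wm n ! k)"
proof -
  have "k \<noteq> 2*n*n+2*n+1" if "even k"
    using that by auto
  then have forward_bound: "even k \<Longrightarrow> k+2*n+1 < length (wm n)"
    using assms by (simp add: length_wm)
  have "k < length (wm n)"
    using assms by (simp add: length_wm)
  then show ?thesis
  proof (cases rule: wm_position_cases)
    case (middle_z i)
    then show ?thesis
      using nth_wm_head_middle(1,3)[of i n] by simp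
  next
    case (middle_y i)
    then have twin: "k+2*n+1 = 4*n+3+0*(2*n)+2*i"
      by simp
    show ?thesis
      using middle_y forward_bound nth_wm_head_middle(4)[of i n] nth_wm_tail(2)[of 0 n i]
      unfolding twin by simp
  next
    case second_x
    then show ?thesis
      using nth_wm_blocks(2,4)[of n] by simp
  next
    case (tail_even j i)
    have "(j+1)*(2*n) < n*(2*n)"
      using tail_even assms by (simp add: algebra_simps)
    then have "j+1 < n"
      by (metis mult_less_cancel2)
    moreover have twin: "k+2*n+1 = 4*n+3+(j+1)*(2*n)+2*i"
      using tail_even by (simp add: algebra_simps)
    ultimately show ?thesis
      using tail_even forward_bound nth_wm_tail[of j n i] nth_wm_tail(2)[of "j+1" n i]
      unfolding twin by simp
  next
    case (tail_odd j i)
    show ?thesis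
    proof (cases j)
      case 0
      then have twin: "k-(2*n+1) = 2*n+2+2*i"
        using tail_odd by simp
      show ?thesis
        using tail_odd 0 nth_wm_head_middle(4)[of i n] nth_wm_tail(2)[of j n i] unfolding twin by simp
    next
      case (Suc j')
      then have twin: "k-(2*n+1) = 4*n+2+j'*(2*n)+2*i"
        using tail_odd by (simp add: algebra_simps)
      show ?thesis
        using tail_odd Suc nth_wm_tail(1)[of j' n i] nth_wm_tail(2)[of j n i] unfolding twin by simp
    qed
  qed (use assms in simp_all)
qed

locale factor_image =
  fixes pre suf :: "'a list" and f :: "'b \<Rightarrow> 'a list" and w :: "'b list"
begin

definition start :: "nat \<Rightarrow> nat" where
  "start k = length pre + length (concat (map f (take k w)))"

abbreviation width :: "nat \<Rightarrow> nat" where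
  "width k \<equiv> length (f (w ! k))"

lemma start_Suc: "k < length w \<Longrightarrow> start (Suc k) = start k + width k"
  unfolding start_def by (simp add: take_Suc_conv_app_nth)

lemma start_mono:
  assumes "k1 \<le> k2"
  shows "start k1 \<le> start k2"
proof -
  obtain d where "k2 = k1 + d"
    using assms le_Suc_ex by blast
  then show ?thesis
    unfolding start_def by (simp add: take_add)
qed

lemma start_length: "start (length w) + length suf = length (pre @ concat (map f w) @ suf)"
  unfolding start_def by simp

lemma nth_start:
  assumes "k < length w" and "r < width k"
  shows "(pre @ concat (map f w) @ suf) ! (start k + r) = f (w ! k) ! r"
proof -
  have decomp: "w = take k w @ [w ! k] @ drop (Suc k) w"
    using assms(1) by (metis append_Cons append_Nil id_take_nth_drop)
  have "concat (map f w) = concat (map f (take k w)) @ f (w ! k) @ concat (map f (drop (Suc k) w))"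
    by (subst decomp) simp
  then show ?thesis
    using assms(2) unfolding start_def by (simp add: nth_append)
qed

lemma start_cover:
  assumes "k1 \<le> k2" and "k2 \<le> length w" and "start k1 \<le> p" and "p < start k2"
  shows "\<exists>k. k1 \<le> k \<and> k < k2 \<and> start k \<le> p \<and> p < start k + width k"
  using assms
proof (induction k2)
  case (Suc k2)
  show ?case
  proof (cases "p < start k2")
    case True
    then have "k1 \<le> k2"
      using Suc.prems(1,3) start_mono[of k2 k1] by (cases "k1 = Suc k2") auto
    then show ?thesis
      using Suc True by (meson Suc_leD less_SucI)
  next
    case False
    then have "k1 \<le> k2"
      using Suc.prems(1,3,4) by (cases "k1 = Suc k2") auto
    then show ?thesis
      using Suc.prems False start_Suc[of k2] by (intro exI[of _ k2]) auto
  qed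
qed simp

lemma start_le_linear:
  assumes "k1 \<le> k2" and "k2 \<le> length w" and "\<And>k. k1 \<le> k \<Longrightarrow> k < k2 \<Longrightarrow> width k \<le> 1"
  shows "start k2 \<le> start k1 + (k2 - k1)"
  using assms
proof (induction k2)
  case (Suc k2)
  show ?case
  proof (cases "k1 = Suc k2")
    case False
    then have "k1 \<le> k2" and "start k2 \<le> start k1 + (k2 - k1)" and "width k2 \<le> 1"
      using Suc by simp_all
    then show ?thesis
      using Suc.prems(2) start_Suc[of k2] by simp
  qed simp
qed simp

end

locale wm_factor = factor_image pre suf f "wm n"
  for pre suf :: word and f :: "letter \<Rightarrow> word" and n :: nat +
  fixes m :: nat
  assumes wm_eq: "wm m = pre @ concat (map f (wm n)) @ suf"
    and x_not_erased: "f LX \<noteq> []"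
begin

lemma start_bound: "start (length (wm n)) \<le> length (wm m)"
  using start_length by (simp add: wm_eq)

lemma nth_wm_start: "k < length (wm n) \<Longrightarrow> r < width k \<Longrightarrow> wm m ! (start k + r) = f (wm n ! k) ! r"
  using nth_start by (simp add: wm_eq)

lemma repeated_letter_image:
  assumes "k < k'" and "k' < length (wm n)" and "wm n ! k = wm n ! k'" and "1 \<le> width k"
  shows "width k = 1 \<and> start k' = start k + 2*m + 1 \<and> even (start k)"
proof -
  have "start (Suc k) \<le> start k'"
    using assms(1) by (intro start_mono) simp
  then have before: "start k < start k'"
    using assms start_Suc[of k] by simp
  have "start k' + width k' = start (Suc k')"
    using assms(2) by (simp add: start_Suc)
  also have "\<dots> \<le> length (wm m)"
    using start_mono[of "Suc k'" "length (wm n)"] start_bound assms(2) by simp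
  finally have inside: "start k' + width k \<le> length (wm m)"
    using assms(3) by simp
  have "wm m ! (start k + r) = wm m ! (start k' + r)" if "r < width k" for r
    using assms that by (simp add: nth_wm_start)
  note same_letter = this
  have "wm m ! start k = wm m ! start k'"
    using same_letter[of 0] assms(4) by (simp add: Suc_le_eq)
  then have twin: "start k' = start k + 2*m + 1 \<and> even (start k)"
    using wm_repeat_distance[of "start k" "start k'" m] before inside assms(4) by simp
  moreover have "width k = 1"
  proof (rule ccontr)
    assume "width k \<noteq> 1"
    then have "1 < width k"
      using assms(4) by simp
    then have "even (start k + 1)"
      using wm_repeat_distance[of "start k + 1" "start k' + 1" m] same_letter[of 1] before inside by simp
    with twin show False
      by simp
  qed
  ultimately show ?thesis
    by simp
qed

lemma x_image:
  "width (2*n) = 1 \<and> width (4*n+1) = 1 \<and> start (4*n+1) = start (2*n) + 2*m + 1 \<and> even (start (2*n))"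
proof -
  have "1 \<le> width (2*n)"
    using x_not_erased nth_wm_blocks(2)[of n] by (simp add: Suc_le_eq)
  then show ?thesis
    using repeated_letter_image[of "2*n" "4*n+1"] nth_wm_blocks(2,4)[of n] by (simp add: length_wm)
qed

lemma tail_image:
  assumes "2*n+1 \<le> k" and "k < 2*n*n+2*n+2" and "1 \<le> width k"
  shows "width k = 1 \<and> (even (start k) \<longleftrightarrow> even k) \<and> (odd k \<longrightarrow> 2*m+1 \<le> start k)"
proof (cases "even k")
  case True
  then show ?thesis
    using wm_twin_position[OF assms(1,2)] repeated_letter_image[of k "k+2*n+1"] assms(3) by simp
next
  case False
  define k' where "k' = k - (2*n+1)"
  have "k = k' + (2*n+1)" and "even k'" and "wm n ! k' = wm n ! k"
    using wm_twin_position[OF assms(1,2)] False assms(1) by (simp_all add: k'_def)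
  moreover have "k < length (wm n)"
    using assms(2) by (simp add: length_wm)
  ultimately show ?thesis
    using repeated_letter_image[of k' k] assms(3) by simp
qed

lemma width_tail_le_1:
  assumes "2*n+1 \<le> k" and "k < 2*n*n+2*n+2"
  shows "width k \<le> 1"
  using tail_image[OF assms] by (cases "width k") auto

lemma start_after_x: "start (2*n+1) = start (2*n) + 1"
  using start_Suc[of "2*n"] x_image by (simp add: length_wm)

(* The 2n letters between the two x's of w_n have images of width at most 1 and fill the
   2m positions between the images of x. *)
lemma m_le_n: "m \<le> n"
proof -
  have "start (4*n+1) \<le> start (2*n+1) + ((4*n+1) - (2*n+1))"
  proof (rule start_le_linear)
    show "4*n+1 \<le> length (wm n)"
      by (simp add: length_wm)
    fix k
    assume "2*n+1 \<le> k" and "k < 4*n+1"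
    moreover have "n \<le> n*n"
      by (simp add: le_square)
    ultimately show "width k \<le> 1"
      by (intro width_tail_le_1) linarith+
  qed simp
  then show ?thesis
    using start_after_x x_image by simp
qed

(* The position right after the image of the first x is covered by a letter at an odd tail
   position, whose twin lies 2n+1 positions earlier, so its image lies 2m+1 positions earlier. *)
lemma start_x_lower:
  assumes "0 < m"
  shows "2*m \<le> start (2*n)"
proof -
  have "start (2*n) + 1 < start (4*n+1)"
    using x_image assms by simp
  then obtain k where k: "2*n+1 \<le> k" "k < 4*n+1" "start k \<le> start (2*n) + 1"
      "start (2*n) + 1 < start k + width k"
    using start_cover[of "2*n+1" "4*n+1"] start_after_x by (auto simp: length_wm)
  have "n \<le> n*n"
    by (simp add: le_square)
  then have "width k = 1 \<and> (even (start k) \<longleftrightarrow> even k) \<and> (odd k \<longrightarrow> 2*m+1 \<le> start k)"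
    using k by (intro tail_image) linarith+
  moreover from this have "start k = start (2*n) + 1"
    using k by simp
  ultimately show ?thesis
    using x_image by auto
qed

(* The position just before the image of k is covered by a letter at an even position k',
   and the twin k'+2n+1 of that letter has its image 2m+1 positions further on. *)
lemma x_orbit_step:
  assumes "0 < m" and "j < n" and "k < 4*n+2+2*n*j"
    and "start k = start (2*n) + j*(2*m) + 2*m + 1"
  shows "\<exists>k' < 4*n+2+2*n*(j+1). width k' = 1 \<and> start k' = start (2*n) + (j+1)*(2*m) + 2*m + 1"
proof -
  define p where "p = start (2*n) + j*(2*m) + 2*m"
  have "start (2*n+1) \<le> p" and "p < start k"
    using assms start_after_x by (simp_all add: p_def)
  moreover have "2*n*j + 2*n \<le> 2*n*n"
    using assms(2) by (metis add.commute mult_Suc_right mult_le_mono2 Suc_leI)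
  then have "k < 2*n*n+2*n+2"
    using assms(3) by simp
  moreover from calculation have "2*n+1 \<le> k"
    using start_mono[of k "2*n+1"] by linarith
  ultimately obtain k' where k': "2*n+1 \<le> k'" "k' < k" "start k' \<le> p" "p < start k' + width k'"
    using start_cover[of "2*n+1" k p] by (auto simp: length_wm)
  have "k' < 2*n*n+2*n+2"
    using k' \<open>k < 2*n*n+2*n+2\<close> by simp
  then have tail: "width k' = 1 \<and> (even (start k') \<longleftrightarrow> even k')"
    using tail_image[of k'] k' by simp
  then have "start k' = p"
    using k' by simp
  then have "even k'"
    using tail x_image by (simp add: p_def)
  then have "k'+2*n+1 < length (wm n)" and "wm n ! k' = wm n ! (k'+2*n+1)"
    using wm_twin_position[OF k'(1) \<open>k' < 2*n*n+2*n+2\<close>] by simp_all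
  then have "width (k'+2*n+1) = 1 \<and> start (k'+2*n+1) = p + 2*m + 1"
    using repeated_letter_image[of k' "k'+2*n+1"] tail \<open>start k' = p\<close> by simp
  moreover have "k'+2*n+1 < 4*n+2+2*n*(j+1)"
    using k' assms(3) by simp
  ultimately show ?thesis
    by (intro exI[of _ "k'+2*n+1"]) (simp add: p_def algebra_simps)
qed

lemma x_orbit:
  assumes "0 < m" and "j \<le> n"
  shows "\<exists>k < 4*n+2+2*n*j. width k = 1 \<and> start k = start (2*n) + j*(2*m) + 2*m + 1"
  using assms(2)
proof (induction j)
  case 0
  show ?case
    using x_image by (intro exI[of _ "4*n+1"]) simp
next
  case (Suc j)
  then obtain k where "k < 4*n+2+2*n*j" and "start k = start (2*n) + j*(2*m) + 2*m + 1"
    by auto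
  then show ?case
    using x_orbit_step[OF assms(1)] Suc.prems by simp
qed

lemma n_le_m:
  assumes "0 < m"
  shows "n \<le> m"
proof -
  obtain k where k: "k < 4*n+2+2*n*n" "width k = 1" "start k = start (2*n) + n*(2*m) + 2*m + 1"
    using x_orbit[OF assms] by blast
  then have "k < length (wm n)"
    by (simp add: length_wm)
  then have "start k + width k \<le> length (wm m)"
    using start_Suc[of k] start_mono[of "Suc k" "length (wm n)"] start_bound by simp
  then have "start (2*n) + n*(2*m) + 2*m + 2 \<le> 2*m*m + 4*m + 2"
    using k by (simp add: length_wm)
  then have "n * m \<le> m * m"
    using start_x_lower[OF assms] by linarith
  then show ?thesis
    using assms by (simp add: mult_le_cancel2)
qed

end

lemma wm_factor_index:
  assumes "wm m = pre @ concat (map f (wm n)) @ suf" and "f LX \<noteq> []" and "0 < m"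
  shows "m = n"
proof -
  interpret wm_factor pre suf f n m
    using assms(1,2) by unfold_locales
  show ?thesis
    using m_le_n n_le_m[OF assms(3)] by simp
qed

lemma filter_LX_wm: "filter (\<lambda>b. b = LX) (wm n) = [LX, LX]"
  unfolding wm_def by (simp add: filter_concat comp_def map_replicate_const)

lemma length_concat_map_filter_del:
  "length (concat (map f u)) = length (concat (map f (filter (\<lambda>b. b = a) u))) + length (concat (map f (del a u)))"
  unfolding del_def by (induction u) auto

lemma concat_map_wm_erased:
  assumes "\<forall>a\<in>set (del LX (wm n)). f a = []"
  shows "concat (map f (wm n)) = f LX @ f LX"
proof -
  have "concat (map f u) = concat (map f (filter (\<lambda>b. b = LX) u))" if "\<forall>a\<in>set (del LX u). f a = []" for u
    using that unfolding del_def by (induction u) auto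
  then show ?thesis
    using assms filter_LX_wm[of n] by simp
qed

lemma concat_map_del: "f a = [] \<Longrightarrow> concat (map f (del a u)) = concat (map f u)"
  unfolding del_def by (induction u) auto

lemma factor_of_wm0_erases:
  assumes "wm 0 = pre @ concat (map f (wm n)) @ suf" and "f LX \<noteq> []"
  shows "\<forall>a\<in>set (del LX (wm n)). f a = []"
proof -
  have "length (concat (map f (wm n))) \<le> 2"
    using arg_cong[OF assms(1), of length] length_wm[of 0] by simp
  then have "2 * length (f LX) + length (concat (map f (del LX (wm n)))) \<le> 2"
    using length_concat_map_filter_del[of f "wm n" LX] filter_LX_wm[of n] by simp
  moreover have "1 \<le> length (f LX)"
    using assms(2) by (simp add: Suc_le_eq)
  ultimately have "length (concat (map f (del LX (wm n)))) = 0"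
    by linarith
  then show ?thesis
    by simp
qed

(* The first letter of a repeats |a| positions later, so |a| = 2m+1 is odd; if |a| >= 2, the
   second letter would repeat as well, at an odd first position. *)
lemma wm_square_factor:
  assumes "wm m = pre @ (a @ a @ r) @ suf" and "a \<noteq> []"
  shows "m = 0 \<and> r = []"
proof -
  let ?s = "length pre"
  have inside: "?s + 2 * length a + length r \<le> length (wm m)"
    using assms(1) by simp
  have same_letter: "wm m ! (?s + i) = wm m ! (?s + length a + i)" if "i < length a" for i
    using assms(1) that by (simp add: nth_append)
  have "?s + length a < length (wm m)"
    using inside assms(2) by (cases a) auto
  then have twin: "?s + length a = ?s + 2*m + 1 \<and> even ?s"
    using wm_repeat_distance[of ?s "?s + length a" m] same_letter[of 0] assms(2) by simp
  have "length a = 1"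
  proof (rule ccontr)
    assume "length a \<noteq> 1"
    then have "1 < length a"
      using assms(2) by (simp add: Suc_lessI)
    then have "even (?s + 1)"
      using wm_repeat_distance[of "?s + 1" "?s + length a + 1" m] same_letter[of 1] inside assms(2) by simp
    with twin show False
      by simp
  qed
  with twin have "m = 0"
    by simp
  then show ?thesis
    using inside \<open>length a = 1\<close> by (simp add: length_wm)
qed

lemma images_eq_if_subword:
  assumes "n \<notin> N"
    and "is_subword (WN N) (concat (map f (wm n))) \<or>
      is_subword (WN N) (concat (map f (LX # LX # del LX (wm n))))"
  shows "concat (map f (wm n)) = concat (map f (LX # LX # del LX (wm n)))"
proof (cases "f LX = []")
  case True
  then show ?thesis
    by (simp add: concat_map_del)
next
  case False
  have "\<forall>a\<in>set (del LX (wm n)). f a = []"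
    using assms(2)
  proof
    assume "is_subword (WN N) (concat (map f (wm n)))"
    then obtain m pre suf where "m \<in> N" and factor: "wm m = pre @ concat (map f (wm n)) @ suf"
      unfolding is_subword_def WN_def by blast
    then have "m \<noteq> n"
      using assms(1) by blast
    then have "m = 0"
      using wm_factor_index[OF factor False] by blast
    then show ?thesis
      using factor_of_wm0_erases[of pre f n suf] factor False by simp
  next
    assume "is_subword (WN N) (concat (map f (LX # LX # del LX (wm n))))"
    then obtain m pre suf where "wm m = pre @ (f LX @ f LX @ concat (map f (del LX (wm n)))) @ suf"
      unfolding is_subword_def WN_def by auto
    then show ?thesis
      using wm_square_factor False by fastforce
  qed
  then have "concat (map f (wm n)) = f LX @ f LX" and "concat (map f (LX # LX # del LX (wm n))) = f LX @ f LX"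
    using concat_map_wm_erased by simp_all
  then show ?thesis
    by simp
qed

lemma is_subword_appendD: "is_subword W (u @ v) \<Longrightarrow> is_subword W v"
  unfolding is_subword_def by (metis append.assoc)

lemma rees_eval_nonempty:
  "u \<noteq> [] \<Longrightarrow> rees_eval W \<sigma> u =
    (if (\<forall>a\<in>set u. \<sigma> a \<noteq> None) \<and> is_subword W (concat (map (\<lambda>a. the (\<sigma> a)) u))
     then Some (concat (map (\<lambda>a. the (\<sigma> a)) u)) else None)"
proof (induction u)
  case (Cons a u)
  show ?case
  proof (cases "u = []")
    case True
    then show ?thesis
      by (cases "\<sigma> a") auto
  next
    case False
    then show ?thesis
      using Cons.IH is_subword_appendD[of W "the (\<sigma> a)"] by (cases "\<sigma> a") auto
  qed
qed simp

theorem lemma3: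
  fixes N :: "nat set" and n :: nat
  assumes "n \<notin> N"
  shows "satisfies (WN N) (wm n) (LX # LX # del LX (wm n))"
  unfolding satisfies_def
proof (intro allI impI)
  fix \<sigma> :: "letter \<Rightarrow> word option"
  let ?rhs = "LX # LX # del LX (wm n)"
  let ?image = "\<lambda>u. concat (map (\<lambda>a. the (\<sigma> a)) u)"
  let ?defined = "\<forall>a\<in>set (wm n). \<sigma> a \<noteq> None"
  have "LX \<in> set (wm n)"
    by (simp add: wm_def)
  then have "wm n \<noteq> []" and same_letters: "set ?rhs = set (wm n)"
    by (auto simp: del_def)
  have "rees_eval (WN N) \<sigma> (wm n) =
      (if ?defined \<and> is_subword (WN N) (?image (wm n)) then Some (?image (wm n)) else None)"
    by (rule rees_eval_nonempty) fact
  moreover have "rees_eval (WN N) \<sigma> ?rhs =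
      (if ?defined \<and> is_subword (WN N) (?image ?rhs) then Some (?image ?rhs) else None)"
    unfolding same_letters[symmetric] by (rule rees_eval_nonempty) simp
  moreover have "?image (wm n) = ?image ?rhs"
    if "is_subword (WN N) (?image (wm n)) \<or> is_subword (WN N) (?image ?rhs)"
    using images_eq_if_subword[OF assms that] .
  ultimately show "rees_eval (WN N) \<sigma> (wm n) = rees_eval (WN N) \<sigma> ?rhs"
    by metis
qed

end
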